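(* Let $a$, $b$, $c$ be pairwise coprime positive integers with $a+b+c$ even. Then for all integers $p,q\geq1$ and all $x,y,z\in\mathbb{R}$, \begin{align*} a^{1-p}b^{1-q}S_{p,q}(a,b,c:x,y,z) &=\sum_{j=1}^{p}\binom{p-1}{j-1}a^{1-j}c^{1+j-p-q}S_{p+q-j,j}(c,-a,b:z,x,y)\\ &\quad+\sum_{h=1}^{q}\binom{q-1}{h-1}(-1)^{h}b^{1-h}c^{1+h-p-q}S_{p+q-h,h}(c,b,a:z,-y,x). \end{align*}
   Context: $E_n(x)$ denotes the $n$th Euler polynomial, defined by $\frac{2e^{xt}}{e^t+1}=\sum_{n\ge0}E_n(x)\frac{t^n}{n!}$. The $n$th Euler function $\mathcal{E}_n$ ($n\ge0$) is defined by $\mathcal{E}_n(x)=E_n(x)$ for $0\le x<1$ and $\mathcal{E}_n(x+m)=(-1)^m\mathcal{E}_n(x)$ for $m\in\mathbb{Z}$. For integers $a,b$, a positive integer $c$, integers $p,q\ge1$ and real $x,y,z$, define $$S_{p,q}(a,b,c:x,y,z)=\sum_{\mu=0}^{c-1}(-1)^{\mu}\mathcal{E}_{p-1}\Big(a\frac{\mu+z}{c}+x\Big)\mathcal{E}_{q-1}\Big(b\frac{\mu+z}{c}+y\Big).$$ *)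

theory Defs
  imports "HOL-Analysis.Analysis" "HOL-Computational_Algebra.Formal_Power_Series"
begin

definition euler_poly :: "nat \<Rightarrow> real \<Rightarrow> real" where
  "euler_poly n x = fact n * fps_nth (2 * fps_exp x * inverse (fps_exp 1 + 1)) n"

text \<open>Euler function: equals E_n on [0,1) and satisfies f(x+m) = (-1)^m f(x).\<close>
definition euler_fun :: "nat \<Rightarrow> real \<Rightarrow> real" where
  "euler_fun n x = (-1) powi \<lfloor>x\<rfloor> * euler_poly n (x - of_int \<lfloor>x\<rfloor>)"

definition S :: "nat \<Rightarrow> nat \<Rightarrow> int \<Rightarrow> int \<Rightarrow> int \<Rightarrow> real \<Rightarrow> real \<Rightarrow> real \<Rightarrow> real" where
  "S p q a b c x y z = (\<Sum>\<mu>\<in>{0..<c}. (-1) powi \<mu> *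
      euler_fun (p - 1) (of_int a * (of_int \<mu> + z) / of_int c + x) *
      euler_fun (q - 1) (of_int b * (of_int \<mu> + z) / of_int c + y))"

end

theory Submission
  imports Defs "HOL-Computational_Algebra.Polynomial"
begin

text \<open>
  Let \<open>E(t, w) = \<Sum>\<^sub>n euler_fun n w \<cdot> t\<^sup>n / n!\<close> be the exponential generating function of
  the Euler functions; by the definition of the Euler polynomials it equals
  \<open>2 (-1)\<^bsup>\<lfloor>w\<rfloor>\<^esup> exp (t \<cdot> frac w) / (exp t + 1)\<close>. Along lines \<open>\<ell>\<^sub>i(s) = k\<^sub>i s + d\<^sub>i\<close> with
  positive integer slopes, \<open>\<Sum> k\<^sub>i\<close> even and \<open>\<Sum> k\<^sub>i t\<^sub>i = 0\<close>, the product
  \<open>G(s) = \<Prod>\<^sub>i E(t\<^sub>i, \<ell>\<^sub>i(s))\<close> is therefore a \<open>1\<close>-periodic step function of \<open>s\<close>: the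
  exponentials cancel and only signs and floors remain. It jumps exactly where some \<open>\<ell>\<^sub>i(s)\<close> is
  an integer \<open>n\<close>, by \<open>2 (-1)\<^sup>n \<Prod>\<^sub>j\<^sub>\<noteq>\<^sub>i E(t\<^sub>j, \<ell>\<^sub>j(s))\<close>, so the jumps over one period
  add up to zero. For the three lines \<open>a s + x\<close>, \<open>b s + y\<close>, \<open>c s - z\<close> this is a
  reciprocity law between generating functions of the sums \<open>S\<close>. Substituting
  \<open>(t\<^sub>1, t\<^sub>2, t\<^sub>3) = (l/a, 1/b, -(l+1)/c)\<close> turns each coefficient into a polynomial
  identity in \<open>l\<close>, whose coefficients give the theorem, provided no two of the lines take
  integer values at the same \<open>s\<close>. The general case follows by moving \<open>(x, z)\<close> to
  \<open>(x + t, z + t)\<close> and letting \<open>t \<rightarrow> 0\<^sup>+\<close>: the Euler functions are continuous from the right.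
\<close>

section \<open>The generating function of the Euler functions\<close>

lemma fps_exp_sum: "fps_exp (\<Sum>i\<in>A. f i) = (\<Prod>i\<in>A. fps_exp (f i) :: 'a::field_char_0 fps)"
  by (induction A rule: infinite_finite_induct) (simp_all add: fps_exp_add_mult)

lemma fps_const_prod: "fps_const (\<Prod>i\<in>A. f i) = (\<Prod>i\<in>A. fps_const (f i) :: 'a::comm_ring_1 fps)"
  by (induction A rule: infinite_finite_induct) (simp_all flip: fps_const_mult)

lemma power_int_minus_one_sum: "(-1 :: 'a::field) powi (\<Sum>i\<in>A. f i) = (\<Prod>i\<in>A. (-1) powi f i)"
  by (induction A rule: infinite_finite_induct) (simp_all add: power_int_add)

definition euler_fun_fps :: "real \<Rightarrow> real \<Rightarrow> real fps" where
  "euler_fun_fps t w = Abs_fps (\<lambda>n. euler_fun n w * t ^ n / fact n)"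

lemma euler_fun_fps_eq:
  "euler_fun_fps t w
    = fps_const (2 * (-1) powi \<lfloor>w\<rfloor>) * fps_exp (t * frac w) * inverse (fps_exp t + 1)"
proof -
  let ?gf = "\<lambda>v. 2 * fps_exp v * inverse (fps_exp 1 + 1 :: real fps)"
  have X0: "fps_nth (fps_const t * fps_X :: real fps) 0 = 0"
    by simp
  have "euler_fun_fps t w = fps_const ((-1) powi \<lfloor>w\<rfloor>) * (?gf (frac w) oo (fps_const t * fps_X))"
    unfolding fps_compose_linear
    by (rule fps_ext) (simp add: euler_fun_fps_def euler_fun_def euler_poly_def frac_def)
  also have "?gf (frac w) oo (fps_const t * fps_X)
      = 2 * fps_exp (t * frac w) * inverse (fps_exp t + 1)"
    by (simp add: fps_compose_mult_distrib[OF X0] fps_inverse_compose[OF X0]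
        fps_compose_add_distrib)
  finally show ?thesis
    by (simp add: numeral_fps_const[symmetric] mult_ac)
qed

lemma euler_fun_fps_step:
  "euler_fun_fps t v = fps_const ((-1) powi (\<lfloor>v\<rfloor> - \<lfloor>w\<rfloor>))
     * fps_exp (t * (v - w) - of_int (\<lfloor>v\<rfloor> - \<lfloor>w\<rfloor>) * t) * euler_fun_fps t w"
proof -
  have sign: "(-1::real) powi \<lfloor>v\<rfloor> = (-1) powi (\<lfloor>v\<rfloor> - \<lfloor>w\<rfloor>) * (-1) powi \<lfloor>w\<rfloor>"
    by (simp flip: power_int_add)
  have "t * frac v = (t * (v - w) - of_int (\<lfloor>v\<rfloor> - \<lfloor>w\<rfloor>) * t) + t * frac w"
    by (simp add: frac_def algebra_simps)
  then have "fps_exp (t * frac v)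
      = fps_exp (t * (v - w) - of_int (\<lfloor>v\<rfloor> - \<lfloor>w\<rfloor>) * t) * fps_exp (t * frac w)"
    by (simp only: fps_exp_add_mult)
  then show ?thesis
    unfolding euler_fun_fps_eq sign by (simp flip: fps_const_mult add: mult_ac)
qed

lemma euler_fun_fps_of_int:
  "euler_fun_fps t (of_int n) * (1 + fps_exp t) = fps_const (2 * (-1) powi n)"
proof -
  have "fps_nth (fps_exp t + 1 :: real fps) 0 \<noteq> 0"
    by simp
  then have "inverse (fps_exp t + 1) * (1 + fps_exp t) = 1"
    by (simp add: add.commute inverse_mult_eq_1)
  then show ?thesis
    unfolding euler_fun_fps_eq by (simp add: mult.assoc)
qed

lemma inverse_fps_exp_plus_one_minus:
  "fps_exp (- t) * inverse (fps_exp (- t) + 1) = inverse (fps_exp t + 1 :: real fps)"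
proof -
  have "fps_exp t * fps_exp (- t) = (1 :: real fps)"
    by (simp flip: fps_exp_add_mult)
  then have "(fps_exp t + 1) * (fps_exp (- t) * inverse (fps_exp (- t) + 1))
      = (fps_exp (- t) + 1) * inverse (fps_exp (- t) + 1)"
    by (simp add: algebra_simps)
  also have "\<dots> = 1"
    by (simp add: inverse_mult_eq_1')
  finally show ?thesis
    by (rule fps_inverse_unique[symmetric])
qed

lemma euler_fun_fps_minus:
  assumes "w \<notin> \<int>"
  shows "euler_fun_fps (- t) (- w) = - euler_fun_fps t w"
proof -
  have floor: "\<lfloor>- w\<rfloor> = - \<lfloor>w\<rfloor> - 1"
    using assms by (simp add: floor_minus ceiling_altdef) (metis Ints_of_int)
  have sign: "(-1::real) powi (- \<lfloor>w\<rfloor> - 1) = - ((-1) powi \<lfloor>w\<rfloor>)"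
    by (simp add: power_int_diff power_int_minus_left)
  have exp: "fps_exp (- t * frac (- w)) = fps_exp (- t) * fps_exp (t * frac w)"
    using assms by (simp add: frac_neg fps_exp_add_mult[symmetric] algebra_simps)
  show ?thesis
    unfolding euler_fun_fps_eq floor sign exp
    by (simp add: inverse_fps_exp_plus_one_minus[of t, symmetric] mult_ac flip: fps_const_neg)
qed

section \<open>Step functions along lines\<close>

lemma floor_line_eq_if_no_integer_between:
  fixes k d l u :: real
  assumes "k > 0" "l \<le> u" and no_int: "\<And>s. l < s \<Longrightarrow> s \<le> u \<Longrightarrow> k * s + d \<notin> \<int>"
  shows "\<lfloor>k * l + d\<rfloor> = \<lfloor>k * u + d\<rfloor>"
proof (rule ccontr)
  assume ne: "\<lfloor>k * l + d\<rfloor> \<noteq> \<lfloor>k * u + d\<rfloor>"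
  define s where "s = (of_int \<lfloor>k * u + d\<rfloor> - d) / k"
  have ks: "k * s + d = of_int \<lfloor>k * u + d\<rfloor>"
    using assms(1) by (simp add: s_def)
  have "\<lfloor>k * l + d\<rfloor> \<le> \<lfloor>k * u + d\<rfloor>"
    using assms(1,2) by (intro floor_mono) (simp add: mult_left_mono)
  with ne have "k * l + d < k * s + d"
    unfolding ks by linarith
  moreover have "k * s + d \<le> k * u + d"
    unfolding ks by simp
  ultimately have "l < s" "s \<le> u"
    using assms(1) by simp_all
  then show False
    using no_int ks by (metis Ints_of_int)
qed

lemma eventually_floor_line_at_left:
  fixes k d s :: real
  assumes "k > 0"
  shows "eventually (\<lambda>x. \<lfloor>k * x + d\<rfloor> = \<lceil>k * s + d\<rceil> - 1) (at_left s)"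
proof -
  define e where "e = (k * s + d - (of_int \<lceil>k * s + d\<rceil> - 1)) / k"
  have "e > 0"
    using assms ceiling_correct[of "k * s + d"] by (simp add: e_def)
  then have "eventually (\<lambda>x. x \<in> {s - e<..<s}) (at_left s)"
    by (intro eventually_at_left_real) simp
  then show ?thesis
  proof eventually_elim
    case (elim x)
    then have "k * (s - e) < k * x" "k * x < k * s"
      using assms by simp_all
    moreover have "k * (s - e) + d = of_int \<lceil>k * s + d\<rceil> - 1"
      using assms by (simp add: e_def field_simps)
    moreover have "k * s + d \<le> of_int \<lceil>k * s + d\<rceil>"
      by simp
    ultimately show ?case
      unfolding floor_eq_iff of_int_diff of_int_1 by linarith
  qed
qed

lemma eventually_floor_line_at_right:
  fixes w k :: real
  assumes "k > 0"
  shows "eventually (\<lambda>t. \<lfloor>w + k * t\<rfloor> = \<lfloor>w\<rfloor> \<and> w + k * t \<notin> \<int>) (at_right 0)"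
proof -
  have "0 < (of_int \<lfloor>w\<rfloor> + 1 - w) / k"
    using assms by (simp add: field_simps) linarith
  then have "eventually (\<lambda>t. t \<in> {0<..<(of_int \<lfloor>w\<rfloor> + 1 - w) / k}) (at_right 0)"
    by (rule eventually_at_right_real)
  then show ?thesis
  proof eventually_elim
    case (elim t)
    then have "w < w + k * t" "w + k * t < of_int \<lfloor>w\<rfloor> + 1"
      using assms by (simp_all add: field_simps)
    then have floor: "\<lfloor>w + k * t\<rfloor> = \<lfloor>w\<rfloor>"
      unfolding floor_eq_iff by linarith
    moreover have "w + k * t \<notin> \<int>"
      using floor \<open>w < w + k * t\<close> by (metis Ints_cases floor_of_int of_int_floor_le not_le)
    ultimately show ?case
      by blast
  qed
qed

lemma integer_points_of_line:
  fixes k :: int and d :: real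
  assumes "k > 0"
  shows "{s. 0 < s \<and> s \<le> 1 \<and> of_int k * s + d \<in> \<int>}
    = (\<lambda>n. (of_int n - d) / of_int k) ` {\<lfloor>d\<rfloor> + 1..<\<lfloor>d\<rfloor> + 1 + k}"
proof -
  have k: "(of_int k :: real) > 0"
    using assms by simp
  have window: "n \<in> {\<lfloor>d\<rfloor> + 1..<\<lfloor>d\<rfloor> + 1 + k} \<longleftrightarrow> d < of_int n \<and> of_int n \<le> d + of_int k" for n
    using floor_less_iff[of d n] le_floor_iff[of "n - k" d] by auto
  show ?thesis
  proof (intro equalityI subsetI)
    fix s assume "s \<in> {s. 0 < s \<and> s \<le> 1 \<and> of_int k * s + d \<in> \<int>}"
    then obtain n where s: "0 < s" "s \<le> 1" "of_int k * s + d = of_int n"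
      by (auto elim: Ints_cases)
    have "0 < of_int k * s" "of_int k * s \<le> of_int k"
      using k s(1,2) mult_left_le[of s "of_int k"] by simp_all
    then have "d < of_int n \<and> of_int n \<le> d + of_int k"
      using s(3) by linarith
    moreover have "s = (of_int n - d) / of_int k"
      using k s(3) by (simp add: field_simps)
    ultimately show "s \<in> (\<lambda>n. (of_int n - d) / of_int k) ` {\<lfloor>d\<rfloor> + 1..<\<lfloor>d\<rfloor> + 1 + k}"
      unfolding window[symmetric] by blast
  next
    fix s assume "s \<in> (\<lambda>n. (of_int n - d) / of_int k) ` {\<lfloor>d\<rfloor> + 1..<\<lfloor>d\<rfloor> + 1 + k}"
    then obtain n where n: "n \<in> {\<lfloor>d\<rfloor> + 1..<\<lfloor>d\<rfloor> + 1 + k}" and s: "s = (of_int n - d) / of_int k"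
      by blast
    from n have "0 < of_int n - d" "of_int n - d \<le> of_int k"
      unfolding window by simp_all
    with k show "s \<in> {s. 0 < s \<and> s \<le> 1 \<and> of_int k * s + d \<in> \<int>}"
      by (simp add: s pos_divide_le_eq)
  qed
qed

lemma telescope_left_jumps:
  fixes f :: "real \<Rightarrow> 'a::ab_group_add"
  assumes "finite J" "J \<subseteq> {l<..u}" "l \<le> u"
    and const: "\<And>x y. l \<le> x \<Longrightarrow> x \<le> y \<Longrightarrow> y \<le> u \<Longrightarrow> J \<inter> {x<..y} = {} \<Longrightarrow> f x = f y"
    and jump: "\<And>s. s \<in> J \<Longrightarrow> eventually (\<lambda>x. f s - f x = D s) (at_left s)"
  shows "f u - f l = (\<Sum>s\<in>J. D s)"
  using assms
proof (induction J arbitrary: u rule: finite_linorder_max_induct)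
  case empty
  then show ?case
    by simp
next
  case (insert m A)
  have m: "l < m" "m \<le> u"
    using insert.prems(1) by auto
  have "f m = f u"
    using insert.hyps(2) m by (intro insert.prems(3)) auto
  define b where "b = Max (insert l A)"
  have b: "l \<le> b" "\<forall>a\<in>A. a \<le> b" "b < m"
    using insert.hyps m by (auto simp: b_def)
  have "eventually (\<lambda>x. f m - f x = D m \<and> x \<in> {b<..<m}) (at_left m)"
    using insert.prems(4)[of m] eventually_at_left_real[OF b(3)] by (simp add: eventually_conj)
  then obtain x where x: "f m - f x = D m" "b < x" "x < m"
    using eventually_happens'[OF trivial_limit_at_left_real] by force
  have "f x - f l = (\<Sum>s\<in>A. D s)"
  proof (rule insert.IH)
    show "A \<subseteq> {l<..x}"
      using insert.prems(1) b(2) x(2) by force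
    show "l \<le> x"
      using b(1) x(2) by simp
    show "f x' = f y'" if "l \<le> x'" "x' \<le> y'" "y' \<le> x" "A \<inter> {x'<..y'} = {}" for x' y'
      using that x m by (intro insert.prems(3)) auto
    show "eventually (\<lambda>x. f s - f x = D s) (at_left s)" if "s \<in> A" for s
      using that insert.prems(4) by blast
  qed
  moreover have "m \<notin> A"
    using insert.hyps(2) by blast
  ultimately show ?case
    using \<open>f m = f u\<close> x(1) insert.hyps(1) by (simp add: algebra_simps)
qed

lemma sum_periodic_window:
  fixes g :: "int \<Rightarrow> 'a::comm_monoid_add"
  assumes periodic: "\<And>n. g (n + P) = g n"
  shows "(\<Sum>n\<in>{m..<m + P}. g n) = (\<Sum>n\<in>{0..<P}. g n)"
proof -
  define F where "F m = (\<Sum>n\<in>{m..<m + P}. g n)" for m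
  have step: "F (m + 1) = F m" for m
  proof (cases "P > 0")
    case True
    have "{m..<m + P} = insert m {m + 1..<m + P}"
      "{m + 1..<m + 1 + P} = insert (m + P) {m + 1..<m + P}"
      using True by auto
    then show ?thesis
      using periodic[of m] by (simp add: F_def add.commute)
  qed (simp add: F_def)
  have "F m = F 0"
  proof (induction m rule: int_induct[where k = 0])
    case (step1 i)
    then show ?case
      using step[of i] by simp
  next
    case (step2 i)
    then show ?case
      using step[of "i - 1"] by simp
  qed simp
  then show ?thesis
    by (simp add: F_def)
qed

lemma sum_reflect_window: "(\<Sum>n\<in>{1 - P..<1}. g n) = (\<Sum>\<mu>\<in>{0..<P}. g (- \<mu> :: int))"
  by (rule sum.reindex_bij_witness[of _ uminus uminus]) auto

section \<open>Jumps of a product of generating functions along lines\<close>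

locale generic_lines =
  fixes I :: "'i set" and k :: "'i \<Rightarrow> int" and d t :: "'i \<Rightarrow> real"
  assumes finite_lines: "finite I"
    and slope_pos: "\<And>i. i \<in> I \<Longrightarrow> k i > 0"
    and even_slope_sum: "even (\<Sum>i\<in>I. k i)"
    and balanced: "(\<Sum>i\<in>I. of_int (k i) * t i) = 0"
    and generic: "\<And>i j s. i \<in> I \<Longrightarrow> j \<in> I \<Longrightarrow> i \<noteq> j \<Longrightarrow>
      of_int (k i) * s + d i \<in> \<int> \<Longrightarrow> of_int (k j) * s + d j \<notin> \<int>"
begin

definition line :: "'i \<Rightarrow> real \<Rightarrow> real" where
  "line i s = of_int (k i) * s + d i"

definition crossing :: "'i \<Rightarrow> int \<Rightarrow> real" where
  "crossing i n = (of_int n - d i) / of_int (k i)"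

definition euler_prod :: "real \<Rightarrow> real fps" where
  "euler_prod s = (\<Prod>i\<in>I. euler_fun_fps (t i) (line i s))"

definition crossing_term :: "'i \<Rightarrow> int \<Rightarrow> real fps" where
  "crossing_term i n
    = fps_const ((-1) powi n) * (\<Prod>j\<in>I - {i}. euler_fun_fps (t j) (line j (crossing i n)))"

lemma line_crossing [simp]: "i \<in> I \<Longrightarrow> line i (crossing i n) = of_int n"
  using slope_pos[of i] by (simp add: line_def crossing_def)

lemma euler_prod_step:
  assumes "\<And>i. i \<in> I \<Longrightarrow> \<lfloor>line i u\<rfloor> = \<lfloor>line i l\<rfloor> + \<delta> i"
  shows "euler_prod u = fps_const ((-1) powi (\<Sum>i\<in>I. \<delta> i))
    * fps_exp (- (\<Sum>i\<in>I. of_int (\<delta> i) * t i)) * euler_prod l"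
proof -
  have "euler_fun_fps (t i) (line i u) = fps_const ((-1) powi \<delta> i)
      * fps_exp (t i * (line i u - line i l) - of_int (\<delta> i) * t i) * euler_fun_fps (t i) (line i l)"
    if "i \<in> I" for i
    using euler_fun_fps_step[of "t i" "line i u" "line i l"] assms[OF that] by simp
  then have "euler_prod u = (\<Prod>i\<in>I. fps_const ((-1) powi \<delta> i)
      * fps_exp (t i * (line i u - line i l) - of_int (\<delta> i) * t i)
      * euler_fun_fps (t i) (line i l))"
    unfolding euler_prod_def by (rule prod.cong[OF refl])
  moreover have "t i * (line i u - line i l) - of_int (\<delta> i) * t i
      = (u - l) * (of_int (k i) * t i) - of_int (\<delta> i) * t i" for i
    by (simp add: line_def algebra_simps)
  then have "(\<Sum>i\<in>I. t i * (line i u - line i l) - of_int (\<delta> i) * t i)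
      = (u - l) * (\<Sum>i\<in>I. of_int (k i) * t i) - (\<Sum>i\<in>I. of_int (\<delta> i) * t i)"
    by (simp only: sum_subtractf sum_distrib_left)
  then have "(\<Prod>i\<in>I. fps_exp (t i * (line i u - line i l) - of_int (\<delta> i) * t i))
      = fps_exp (- (\<Sum>i\<in>I. of_int (\<delta> i) * t i))"
    by (simp add: balanced flip: fps_exp_sum)
  ultimately show ?thesis
    by (simp add: prod.distrib euler_prod_def fps_const_prod power_int_minus_one_sum)
qed

lemma euler_prod_periodic: "euler_prod (s + 1) = euler_prod s"
proof -
  have "line i (s + 1) = line i s + of_int (k i)" for i
    by (simp add: line_def algebra_simps)
  then have "euler_prod (s + 1) = fps_const ((-1) powi (\<Sum>i\<in>I. k i))
      * fps_exp (- (\<Sum>i\<in>I. of_int (k i) * t i)) * euler_prod s"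
    by (intro euler_prod_step) simp
  then show ?thesis
    using even_slope_sum by (simp add: balanced)
qed

lemma euler_prod_eq_if_no_crossing:
  assumes "x \<le> y" and no_crossing: "\<And>i s. i \<in> I \<Longrightarrow> x < s \<Longrightarrow> s \<le> y \<Longrightarrow> line i s \<notin> \<int>"
  shows "euler_prod x = euler_prod y"
proof -
  have "\<lfloor>line i y\<rfloor> = \<lfloor>line i x\<rfloor> + 0" if "i \<in> I" for i
    using floor_line_eq_if_no_integer_between[of "of_int (k i)" x y "d i"]
      slope_pos[OF that] \<open>x \<le> y\<close> no_crossing[OF that] by (simp add: line_def)
  then show ?thesis
    using euler_prod_step[of y x "\<lambda>_. 0"] by simp
qed

lemma euler_prod_left_jump:
  assumes "i \<in> I" "line i s \<in> \<int>"
  shows "eventually (\<lambda>x. euler_prod s - euler_prod x = (1 + fps_exp (t i)) * euler_prod s)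
    (at_left s)"
proof -
  have "eventually (\<lambda>x. \<forall>j\<in>I. \<lfloor>line j x\<rfloor> = \<lceil>line j s\<rceil> - 1) (at_left s)"
    unfolding line_def using finite_lines slope_pos
    by (auto intro!: eventually_ball_finite eventually_floor_line_at_left)
  then show ?thesis
  proof eventually_elim
    case (elim x)
    have "\<lfloor>line j s\<rfloor> = \<lfloor>line j x\<rfloor> + (if j = i then 1 else 0)" if "j \<in> I" for j
    proof (cases "j = i")
      case True
      with elim that assms(2) show ?thesis
        by (auto elim: Ints_cases)
    next
      case False
      then have "line j s \<notin> \<int>"
        using generic[of i j s] assms that by (simp add: line_def)
      then have "\<lceil>line j s\<rceil> = \<lfloor>line j s\<rfloor> + 1"
        by (simp add: ceiling_altdef) (metis Ints_of_int)
      with elim that False show ?thesis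
        by simp
    qed
    moreover have "(\<Sum>j\<in>I. if j = i then 1 else 0 :: int) = 1"
      "(\<Sum>j\<in>I. of_int (if j = i then 1 else 0 :: int) * t j) = t i"
      using finite_lines assms(1) by (simp_all add: sum.remove)
    ultimately have "euler_prod s = - (fps_exp (- t i) * euler_prod x)"
      using euler_prod_step[of s x "\<lambda>j. if j = i then 1 else 0"] by (simp flip: fps_const_neg)
    then have "fps_exp (t i) * euler_prod s = - (fps_exp (t i) * fps_exp (- t i)) * euler_prod x"
      by (simp add: mult_ac)
    also have "fps_exp (t i) * fps_exp (- t i) = (1 :: real fps)"
      by (simp flip: fps_exp_add_mult)
    finally show ?case
      by (simp add: algebra_simps)
  qed
qed

lemma euler_prod_crossing:
  assumes "i \<in> I"
  shows "(1 + fps_exp (t i)) * euler_prod (crossing i n) = fps_const 2 * crossing_term i n"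
proof -
  have "euler_prod (crossing i n)
      = euler_fun_fps (t i) (of_int n) * (\<Prod>j\<in>I - {i}. euler_fun_fps (t j) (line j (crossing i n)))"
    unfolding euler_prod_def using assms finite_lines by (simp add: prod.remove)
  then show ?thesis
    using euler_fun_fps_of_int[of "t i" n]
    by (simp add: crossing_term_def mult_ac flip: fps_const_mult)
qed

lemma crossing_term_periodic:
  assumes "i \<in> I"
  shows "crossing_term i (n + k i) = crossing_term i n"
proof -
  have "crossing i (n + k i) = crossing i n + 1"
    using slope_pos[OF assms] by (simp add: crossing_def field_simps)
  then have "fps_const 2 * crossing_term i (n + k i) = fps_const 2 * crossing_term i n"
    by (simp flip: euler_prod_crossing[OF assms] add: euler_prod_periodic)
  then show ?thesis
    by simp
qed

lemma integer_points_in_period: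
  assumes "i \<in> I"
  shows "{s. 0 < s \<and> s \<le> 1 \<and> line i s \<in> \<int>} = crossing i ` {\<lfloor>d i\<rfloor> + 1..<\<lfloor>d i\<rfloor> + 1 + k i}"
  using integer_points_of_line[OF slope_pos[OF assms], of "d i"]
  by (simp add: line_def crossing_def)

lemma finite_integer_points_in_period: "finite {s. 0 < s \<and> s \<le> 1 \<and> (\<exists>i\<in>I. line i s \<in> \<int>)}"
proof -
  have "{s. 0 < s \<and> s \<le> 1 \<and> (\<exists>i\<in>I. line i s \<in> \<int>)}
      = (\<Union>i\<in>I. {s. 0 < s \<and> s \<le> 1 \<and> line i s \<in> \<int>})"
    by auto
  then show ?thesis
    using finite_lines by (simp add: integer_points_in_period)
qed

lemma euler_prod_telescope:
  "euler_prod 1 - euler_prod 0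
    = (\<Sum>s | 0 < s \<and> s \<le> 1 \<and> (\<exists>i\<in>I. line i s \<in> \<int>).
        \<Sum>i | i \<in> I \<and> line i s \<in> \<int>. (1 + fps_exp (t i)) * euler_prod s)"
proof (rule telescope_left_jumps[OF finite_integer_points_in_period])
  show "{s. 0 < s \<and> s \<le> 1 \<and> (\<exists>i\<in>I. line i s \<in> \<int>)} \<subseteq> {0<..1}" "(0::real) \<le> 1"
    by auto
  show "euler_prod x = euler_prod y"
    if "0 \<le> x" "x \<le> y" "y \<le> 1" "{s. 0 < s \<and> s \<le> 1 \<and> (\<exists>i\<in>I. line i s \<in> \<int>)} \<inter> {x<..y} = {}"
    for x y
  proof (rule euler_prod_eq_if_no_crossing)
    fix i s assume "i \<in> I" "x < s" "s \<le> y"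
    then have "s \<notin> {s. 0 < s \<and> s \<le> 1 \<and> (\<exists>i\<in>I. line i s \<in> \<int>)}"
      using that(4) by auto
    then show "line i s \<notin> \<int>"
      using \<open>i \<in> I\<close> \<open>x < s\<close> \<open>s \<le> y\<close> that(1,3) by auto
  qed (use that in simp)
  show "eventually (\<lambda>x. euler_prod s - euler_prod x
      = (\<Sum>i | i \<in> I \<and> line i s \<in> \<int>. (1 + fps_exp (t i)) * euler_prod s)) (at_left s)"
    if crossing: "s \<in> {s. 0 < s \<and> s \<le> 1 \<and> (\<exists>i\<in>I. line i s \<in> \<int>)}" for s
  proof -
    obtain i where i: "i \<in> I" "line i s \<in> \<int>"
      using crossing by blast
    then have "{i \<in> I. line i s \<in> \<int>} = {i}"
      using generic[of i _ s] by (auto simp: line_def)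
    then show ?thesis
      using euler_prod_left_jump[OF i] by simp
  qed
qed

theorem sum_crossing_terms_eq_0: "(\<Sum>i\<in>I. \<Sum>n\<in>{m i..<m i + k i}. crossing_term i n) = 0"
proof -
  let ?J = "{s. 0 < s \<and> s \<le> 1 \<and> (\<exists>i\<in>I. line i s \<in> \<int>)}"
  have "0 = euler_prod 1 - euler_prod 0"
    using euler_prod_periodic[of 0] by simp
  also have "\<dots> = (\<Sum>i\<in>I. \<Sum>s | s \<in> ?J \<and> line i s \<in> \<int>. (1 + fps_exp (t i)) * euler_prod s)"
    unfolding euler_prod_telescope using finite_integer_points_in_period finite_lines
    by (rule sum.swap_restrict)
  also have "\<dots> = (\<Sum>i\<in>I. \<Sum>n\<in>{\<lfloor>d i\<rfloor> + 1..<\<lfloor>d i\<rfloor> + 1 + k i}. fps_const 2 * crossing_term i n)"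
  proof (rule sum.cong[OF refl])
    fix i assume "i \<in> I"
    then have "{s \<in> ?J. line i s \<in> \<int>} = crossing i ` {\<lfloor>d i\<rfloor> + 1..<\<lfloor>d i\<rfloor> + 1 + k i}"
      unfolding integer_points_in_period[OF \<open>i \<in> I\<close>, symmetric] by auto
    moreover have "inj_on (crossing i) {\<lfloor>d i\<rfloor> + 1..<\<lfloor>d i\<rfloor> + 1 + k i}"
      using slope_pos[OF \<open>i \<in> I\<close>] by (auto simp: inj_on_def crossing_def)
    ultimately show "(\<Sum>s | s \<in> ?J \<and> line i s \<in> \<int>. (1 + fps_exp (t i)) * euler_prod s)
        = (\<Sum>n\<in>{\<lfloor>d i\<rfloor> + 1..<\<lfloor>d i\<rfloor> + 1 + k i}. fps_const 2 * crossing_term i n)"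
      by (simp add: sum.reindex euler_prod_crossing[OF \<open>i \<in> I\<close>])
  qed
  also have "\<dots> = (\<Sum>i\<in>I. fps_const 2 * (\<Sum>n\<in>{m i..<m i + k i}. crossing_term i n))"
  proof (rule sum.cong[OF refl])
    fix i assume "i \<in> I"
    then show "(\<Sum>n\<in>{\<lfloor>d i\<rfloor> + 1..<\<lfloor>d i\<rfloor> + 1 + k i}. fps_const 2 * crossing_term i n)
        = fps_const 2 * (\<Sum>n\<in>{m i..<m i + k i}. crossing_term i n)"
      using sum_periodic_window[of "crossing_term i" "k i" "\<lfloor>d i\<rfloor> + 1"]
        sum_periodic_window[of "crossing_term i" "k i" "m i"] crossing_term_periodic
      by (simp add: sum_distrib_left[symmetric])
  qed
  also have "\<dots> = fps_const 2 * (\<Sum>i\<in>I. \<Sum>n\<in>{m i..<m i + k i}. crossing_term i n)"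
    by (rule sum_distrib_left[symmetric])
  finally show ?thesis
    by simp
qed

end

section \<open>Reciprocity for the generating functions of \<open>S\<close>\<close>

definition S_fps :: "real \<Rightarrow> real \<Rightarrow> int \<Rightarrow> int \<Rightarrow> int \<Rightarrow> real \<Rightarrow> real \<Rightarrow> real \<Rightarrow> real fps" where
  "S_fps \<alpha> \<beta> a b c x y z = (\<Sum>\<mu>\<in>{0..<c}. fps_const ((-1) powi \<mu>)
     * euler_fun_fps \<alpha> (of_int a * (of_int \<mu> + z) / of_int c + x)
     * euler_fun_fps \<beta> (of_int b * (of_int \<mu> + z) / of_int c + y))"

lemma sum_crossing_terms_three_lines:
  fixes a b c ma mb mc :: int and u v w \<alpha> \<beta> \<gamma> :: real
  assumes "a > 0" "b > 0" "c > 0" "even (a + b + c)"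
    and "of_int a * \<alpha> + of_int b * \<beta> + of_int c * \<gamma> = 0"
    and "\<And>s. of_int a * s + u \<in> \<int> \<Longrightarrow> of_int b * s + v \<notin> \<int>"
      "\<And>s. of_int a * s + u \<in> \<int> \<Longrightarrow> of_int c * s + w \<notin> \<int>"
      "\<And>s. of_int b * s + v \<in> \<int> \<Longrightarrow> of_int c * s + w \<notin> \<int>"
  shows "(\<Sum>n\<in>{ma..<ma + a}. fps_const ((-1) powi n)
        * euler_fun_fps \<beta> (of_int b * ((of_int n - u) / of_int a) + v)
        * euler_fun_fps \<gamma> (of_int c * ((of_int n - u) / of_int a) + w))
    + (\<Sum>n\<in>{mb..<mb + b}. fps_const ((-1) powi n)
        * euler_fun_fps \<alpha> (of_int a * ((of_int n - v) / of_int b) + u)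
        * euler_fun_fps \<gamma> (of_int c * ((of_int n - v) / of_int b) + w))
    + (\<Sum>n\<in>{mc..<mc + c}. fps_const ((-1) powi n)
        * euler_fun_fps \<alpha> (of_int a * ((of_int n - w) / of_int c) + u)
        * euler_fun_fps \<beta> (of_int b * ((of_int n - w) / of_int c) + v)) = 0"
proof -
  interpret L: generic_lines "{0, 1, 2 :: nat}" "nth [a, b, c]" "nth [u, v, w]" "nth [\<alpha>, \<beta>, \<gamma>]"
    using assms by unfold_locales (auto simp: add.assoc)
  have "(\<Sum>i\<in>{0, 1, 2}.
      \<Sum>n\<in>{[ma, mb, mc] ! i..<[ma, mb, mc] ! i + [a, b, c] ! i}. L.crossing_term i n) = 0"
    by (rule L.sum_crossing_terms_eq_0)
  moreover have "(\<Sum>i\<in>{0, 1, 2 :: nat}. g i) = g 0 + g 1 + g 2" for g :: "nat \<Rightarrow> real fps"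
    by (simp add: add.assoc)
  moreover have "L.crossing_term 0 n = fps_const ((-1) powi n)
      * euler_fun_fps \<beta> (of_int b * ((of_int n - u) / of_int a) + v)
      * euler_fun_fps \<gamma> (of_int c * ((of_int n - u) / of_int a) + w)"
    "L.crossing_term 1 n = fps_const ((-1) powi n)
      * euler_fun_fps \<alpha> (of_int a * ((of_int n - v) / of_int b) + u)
      * euler_fun_fps \<gamma> (of_int c * ((of_int n - v) / of_int b) + w)"
    "L.crossing_term 2 n = fps_const ((-1) powi n)
      * euler_fun_fps \<alpha> (of_int a * ((of_int n - w) / of_int c) + u)
      * euler_fun_fps \<beta> (of_int b * ((of_int n - w) / of_int c) + v)" for n
    unfolding L.crossing_term_def
    by (simp_all add: L.line_def L.crossing_def insert_Diff_if mult.assoc)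
  ultimately show ?thesis
    by (simp add: numeral_2_eq_2 add.assoc)
qed

lemma integral_lines_combination:
  fixes k1 k2 :: int and s d1 d2 :: real
  assumes "of_int k1 * s + d1 \<in> \<int>" "of_int k2 * s + d2 \<in> \<int>"
  shows "of_int k2 * d1 - of_int k1 * d2 \<in> \<int>"
proof -
  have "of_int k2 * d1 - of_int k1 * d2
      = of_int k2 * (of_int k1 * s + d1) - of_int k1 * (of_int k2 * s + d2)"
    by (simp add: algebra_simps)
  with assms show ?thesis
    by (metis Ints_diff Ints_mult Ints_of_int)
qed

lemma euler_fun_fps_reflect_line:
  fixes k h :: int
  assumes "of_int h \<noteq> (0::real)" "of_int k * ((of_int (- \<mu>) - u) / of_int h) + v \<notin> \<int>"
  shows "euler_fun_fps t (of_int k * ((of_int (- \<mu>) - u) / of_int h) + v)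
    = - euler_fun_fps (- t) (of_int k * (of_int \<mu> + u) / of_int h + - v)"
proof -
  have eq: "- (of_int k * ((of_int (- \<mu>) - u) / of_int h) + v)
      = of_int k * (of_int \<mu> + u) / of_int h + - v"
    using assms(1) by (simp add: field_simps)
  have "- (of_int k * ((of_int (- \<mu>) - u) / of_int h) + v) \<notin> \<int>"
    using assms(2) minus_in_Ints_iff by blast
  from euler_fun_fps_minus[OF this, of "- t"]
  have "euler_fun_fps t (of_int k * ((of_int (- \<mu>) - u) / of_int h) + v)
      = - euler_fun_fps (- t) (- (of_int k * ((of_int (- \<mu>) - u) / of_int h) + v))"
    unfolding minus_minus .
  then show ?thesis
    unfolding eq .
qed

theorem S_fps_reciprocity:
  fixes a b c :: int and x y z \<alpha> \<beta> \<gamma> :: real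
  assumes pos: "a > 0" "b > 0" "c > 0" and even: "even (a + b + c)"
    and balanced: "of_int a * \<alpha> + of_int b * \<beta> + of_int c * \<gamma> = 0"
    and generic: "of_int c * x + of_int a * z \<notin> \<int>" "of_int b * x - of_int a * y \<notin> \<int>"
      "of_int c * y + of_int b * z \<notin> \<int>"
  shows "S_fps \<alpha> \<beta> a b c x y z = S_fps (- \<gamma>) \<alpha> c (- a) b z x y - S_fps (- \<gamma>) (- \<beta>) c b a z (- y) x"
proof -
  have ab: "of_int b * s + y \<notin> \<int>" if "of_int a * s + x \<in> \<int>" for s
    using integral_lines_combination[of a s x b y] that generic(2) by blast
  have ac: "of_int c * s + - z \<notin> \<int>" if "of_int a * s + x \<in> \<int>" for s
    using integral_lines_combination[of a s x c "- z"] that generic(1) by auto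
  have bc: "of_int c * s + - z \<notin> \<int>" if "of_int b * s + y \<in> \<int>" for s
    using integral_lines_combination[of b s y c "- z"] that generic(3) by auto
  have nonzero: "real_of_int a \<noteq> 0" "real_of_int b \<noteq> 0"
    using pos by simp_all
  have on_b_line: "of_int a * ((of_int (- \<mu>) - y) / of_int b) + x
      = of_int (- a) * (of_int \<mu> + y) / of_int b + x" for \<mu>
    by (simp add: field_simps)
  have on_a: "of_int a * ((of_int (- \<mu>) - x) / of_int a) + x \<in> \<int>"
    and on_b: "of_int b * ((of_int (- \<mu>) - y) / of_int b) + y \<in> \<int>" for \<mu>
    using nonzero by simp_all
  \<comment> \<open>The windows \<open>{1 - a..<1}\<close> and \<open>{1 - b..<1}\<close> are mapped onto \<open>{0..<a}\<close> and \<open>{0..<b}\<close> by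
    \<open>n \<mapsto> -n\<close>, and reflecting the Euler functions there brings the sums into the form of \<open>S_fps\<close>.\<close>
  have "(\<Sum>n\<in>{1 - a..<1}. fps_const ((-1) powi n)
        * euler_fun_fps \<beta> (of_int b * ((of_int n - x) / of_int a) + y)
        * euler_fun_fps \<gamma> (of_int c * ((of_int n - x) / of_int a) + - z))
      = S_fps (- \<gamma>) (- \<beta>) c b a z (- y) x"
    unfolding sum_reflect_window S_fps_def
    by (intro sum.cong refl)
      (simp only: euler_fun_fps_reflect_line[OF nonzero(1) ab[OF on_a]]
        euler_fun_fps_reflect_line[OF nonzero(1) ac[OF on_a]] power_int_minus_one_minus,
       simp add: mult_ac)
  moreover have "(\<Sum>n\<in>{1 - b..<1}. fps_const ((-1) powi n)
        * euler_fun_fps \<alpha> (of_int a * ((of_int n - y) / of_int b) + x)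
        * euler_fun_fps \<gamma> (of_int c * ((of_int n - y) / of_int b) + - z))
      = - S_fps (- \<gamma>) \<alpha> c (- a) b z x y"
    unfolding sum_reflect_window S_fps_def sum_negf[symmetric]
    by (intro sum.cong refl)
      (simp only: euler_fun_fps_reflect_line[OF nonzero(2) bc[OF on_b]] on_b_line
        power_int_minus_one_minus,
       simp add: mult_ac)
  moreover have "(\<Sum>n\<in>{0..<c}. fps_const ((-1) powi n)
        * euler_fun_fps \<alpha> (of_int a * ((of_int n - - z) / of_int c) + x)
        * euler_fun_fps \<beta> (of_int b * ((of_int n - - z) / of_int c) + y))
      = S_fps \<alpha> \<beta> a b c x y z"
    by (simp add: S_fps_def)
  ultimately show ?thesis
    using sum_crossing_terms_three_lines[where u = x and v = y and w = "- z"
        and ma = "1 - a" and mb = "1 - b" and mc = 0, OF pos even balanced ab ac bc]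
    by (simp add: algebra_simps)
qed

section \<open>Comparing coefficients\<close>

lemma fps_nth_S_fps:
  "fps_nth (S_fps \<alpha> \<beta> a b c x y z) n = (\<Sum>i\<le>n. S (Suc i) (Suc (n - i)) a b c x y z
     * (\<alpha> ^ i * \<beta> ^ (n - i) / (fact i * fact (n - i))))"
proof -
  have "fps_nth (S_fps \<alpha> \<beta> a b c x y z) n = (\<Sum>\<mu>\<in>{0..<c}. \<Sum>i\<le>n. (-1) powi \<mu>
      * (euler_fun i (of_int a * (of_int \<mu> + z) / of_int c + x) * \<alpha> ^ i / fact i)
      * (euler_fun (n - i) (of_int b * (of_int \<mu> + z) / of_int c + y)
          * \<beta> ^ (n - i) / fact (n - i)))"
    unfolding S_fps_def fps_sum_nth mult.assoc fps_mult_left_const_nth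
    unfolding fps_mult_nth by (simp add: euler_fun_fps_def sum_distrib_left atLeast0AtMost)
  also have "\<dots> = (\<Sum>i\<le>n. \<Sum>\<mu>\<in>{0..<c}. (-1) powi \<mu>
      * (euler_fun i (of_int a * (of_int \<mu> + z) / of_int c + x) * \<alpha> ^ i / fact i)
      * (euler_fun (n - i) (of_int b * (of_int \<mu> + z) / of_int c + y)
          * \<beta> ^ (n - i) / fact (n - i)))"
    by (rule sum.swap)
  also have "\<dots> = (\<Sum>i\<le>n. S (Suc i) (Suc (n - i)) a b c x y z
      * (\<alpha> ^ i * \<beta> ^ (n - i) / (fact i * fact (n - i))))"
    by (simp add: S_def sum_distrib_left sum_distrib_right sum_divide_distrib mult_ac)
  finally show ?thesis .
qed

lemma coeff_one_plus_X_power: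
  "coeff ([:1, 1:] ^ i) r = (of_nat (i choose r) :: 'a::comm_semiring_1)"
proof (cases "r \<le> i")
  case True
  then show ?thesis by (simp add: coeff_linear_poly_power)
next
  case False
  then show ?thesis
    by (simp add: coeff_eq_0 degree_linear_power binomial_eq_0)
qed

lemma coeff_eq_of_poly_identity:
  fixes A B C :: "nat \<Rightarrow> real"
  assumes "r \<le> n"
    and identity: "\<And>l. (\<Sum>i\<le>n. A i * l ^ i)
      = (\<Sum>i\<le>n. B i * (l ^ (n - i) * (l + 1) ^ i)) + (\<Sum>i\<le>n. C i * (l + 1) ^ i)"
  shows "A r = (\<Sum>i\<le>n. B i * (if r < n - i then 0 else of_nat (i choose (r - (n - i)))))
    + (\<Sum>i\<le>n. C i * of_nat (i choose r))"
proof -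
  define PA where "PA = (\<Sum>i\<le>n. smult (A i) (monom 1 i))"
  define PB where "PB = (\<Sum>i\<le>n. smult (B i) (monom 1 (n - i) * [:1, 1:] ^ i))"
  define PC where "PC = (\<Sum>i\<le>n. smult (C i) ([:1, 1:] ^ i))"
  have "poly PA = poly (PB + PC)"
    using identity by (simp add: PA_def PB_def PC_def poly_sum poly_monom fun_eq_iff add.commute)
  then have "coeff PA r = coeff PB r + coeff PC r"
    by (simp add: poly_eq_poly_eq_iff)
  moreover have "coeff PA r = A r"
    using assms(1)
    by (simp add: PA_def coeff_sum coeff_monom if_distrib[of "\<lambda>x. A _ * x"] cong: if_cong)
  ultimately show ?thesis
    unfolding PB_def PC_def coeff_sum coeff_smult coeff_monom_mult coeff_one_plus_X_power mult_1_left
    by simp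
qed

lemma sum_reindex_binomial:
  fixes A C :: real and F :: "nat \<Rightarrow> nat \<Rightarrow> real" and r m :: nat
  assumes "A \<noteq> 0" "C \<noteq> 0"
  shows "(\<Sum>j=1..Suc r. real (r choose (j - 1)) * A powi (1 - int j)
      * C powi (1 + int j - int (Suc r) - int (Suc m)) * F (Suc r + Suc m - j) j)
    = fact r * fact m * (\<Sum>i\<le>r + m. F (Suc i) (Suc (r + m - i))
      / (C ^ i * A ^ (r + m - i) * fact i * fact (r + m - i))
      * (if r < r + m - i then 0 else of_nat (i choose (r - (r + m - i)))))"
proof -
  define T where "T j = real (r choose (j - 1)) * A powi (1 - int j)
      * C powi (1 + int j - int (Suc r) - int (Suc m)) * F (Suc r + Suc m - j) j" for j
  define G where "G i = F (Suc i) (Suc (r + m - i))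
      / (C ^ i * A ^ (r + m - i) * fact i * fact (r + m - i))
      * (if r < r + m - i then 0 else of_nat (i choose (r - (r + m - i))))" for i
  have "(\<Sum>j=1..Suc r. T j) = (\<Sum>i=m..r + m. T (r + m + 1 - i))"
    by (rule sum.reindex_bij_witness[of _ "\<lambda>i. r + m + 1 - i" "\<lambda>j. r + m + 1 - j"]) auto
  also have "\<dots> = (\<Sum>i=m..r + m. fact r * fact m * G i)"
  proof (rule sum.cong[OF refl])
    fix i assume "i \<in> {m..r + m}"
    then obtain t u where t: "i = m + t" and u: "r = t + u"
      by (metis atLeastAtMost_iff le_add_diff_inverse le_add_diff_inverse2 add_le_cancel_right
          add.commute)
    have idx: "r + m + 1 - i = Suc u" "r + m - i = u" "r - (r + m - i) = t"
      "Suc r + Suc m - Suc u = Suc i" "Suc u - 1 = u" "r - u = t" "\<not> r < u"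
      using t u by auto
    have exps: "(1::int) - int (Suc u) = - int u"
      "1 + int (Suc u) - int (Suc r) - int (Suc m) = - int i"
      using t u by simp_all
    have binom: "real (r choose u) = fact r / (fact u * fact t)"
      "real (i choose t) = fact i / (fact t * fact m)"
      using t u binomial_fact[of u r] binomial_fact[of t i] by simp_all
    show "T (r + m + 1 - i) = fact r * fact m * G i"
      unfolding T_def G_def idx exps power_int_minus power_int_of_nat binom
      using assms \<open>\<not> r < u\<close> by (simp add: field_simps)
  qed
  also have "\<dots> = fact r * fact m * (\<Sum>i\<le>r + m. G i)"
  proof -
    have "(\<Sum>i\<le>r + m. G i) = (\<Sum>i=m..r + m. G i)"
      by (rule sum.mono_neutral_right) (auto simp: G_def)
    then show ?thesis by (simp add: sum_distrib_left)
  qed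
  finally show ?thesis by (simp add: T_def G_def)
qed

text \<open>
  Specialising \<open>(\<alpha>, \<beta>, \<gamma>) = (l/a, 1/b, -(l+1)/c)\<close> in \<open>S_fps_reciprocity\<close> makes the \<open>n\<close>-th
  coefficient a polynomial identity in \<open>l\<close>; its coefficient of \<open>l\<^sup>r\<close> is the following.
\<close>

lemma S_coeff_reciprocity:
  fixes a b c :: int and x y z :: real and r n :: nat
  assumes pos: "a > 0" "b > 0" "c > 0" and even: "even (a + b + c)" and "r \<le> n"
    and generic: "of_int c * x + of_int a * z \<notin> \<int>" "of_int b * x - of_int a * y \<notin> \<int>"
      "of_int c * y + of_int b * z \<notin> \<int>"
  shows "S (Suc r) (Suc (n - r)) a b c x y z
      / (of_int a ^ r * of_int b ^ (n - r) * fact r * fact (n - r))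
    = (\<Sum>i\<le>n. S (Suc i) (Suc (n - i)) c (-a) b z x y
        / (of_int c ^ i * of_int a ^ (n - i) * fact i * fact (n - i))
        * (if r < n - i then 0 else of_nat (i choose (r - (n - i)))))
    + (\<Sum>i\<le>n. - (S (Suc i) (Suc (n - i)) c b a z (-y) x * (-1) ^ (n - i))
        / (of_int c ^ i * of_int b ^ (n - i) * fact i * fact (n - i)) * of_nat (i choose r))"
proof (rule coeff_eq_of_poly_identity[OF \<open>r \<le> n\<close>])
  fix l :: real
  have nonzero: "real_of_int a \<noteq> 0" "real_of_int b \<noteq> 0" "real_of_int c \<noteq> 0"
    using pos by simp_all
  have balanced:
    "of_int a * (l / of_int a) + of_int b * (1 / of_int b) + of_int c * (- (l + 1) / of_int c) = 0"
    using nonzero by (simp add: field_simps)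
  have "- (- (l + 1) / of_int c) = (l + 1) / (of_int c :: real)"
    by (metis minus_divide_left minus_minus)
  then have "fps_nth (S_fps (l / of_int a) (1 / of_int b) a b c x y z) n
      = fps_nth (S_fps ((l + 1) / of_int c) (l / of_int a) c (- a) b z x y) n
      - fps_nth (S_fps ((l + 1) / of_int c) (- (1 / of_int b)) c b a z (- y) x) n"
    using S_fps_reciprocity[OF pos even balanced generic] by simp
  moreover have "fps_nth (S_fps (l / of_int a) (1 / of_int b) a b c x y z) n
      = (\<Sum>i\<le>n. S (Suc i) (Suc (n - i)) a b c x y z
          / (of_int a ^ i * of_int b ^ (n - i) * fact i * fact (n - i)) * l ^ i)"
    unfolding fps_nth_S_fps by (intro sum.cong refl) (simp add: power_divide)
  moreover have "fps_nth (S_fps ((l + 1) / of_int c) (l / of_int a) c (- a) b z x y) n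
      = (\<Sum>i\<le>n. S (Suc i) (Suc (n - i)) c (-a) b z x y
          / (of_int c ^ i * of_int a ^ (n - i) * fact i * fact (n - i))
          * (l ^ (n - i) * (l + 1) ^ i))"
    unfolding fps_nth_S_fps by (intro sum.cong refl) (simp add: power_divide mult_ac)
  moreover have "fps_nth (S_fps ((l + 1) / of_int c) (- (1 / of_int b)) c b a z (- y) x) n
      = (\<Sum>i\<le>n. S (Suc i) (Suc (n - i)) c b a z (-y) x * (-1) ^ (n - i)
          / (of_int c ^ i * of_int b ^ (n - i) * fact i * fact (n - i)) * (l + 1) ^ i)"
    unfolding fps_nth_S_fps
    by (intro sum.cong refl) (simp add: power_divide power_minus[of "1 / _"] mult_ac)
  ultimately show "(\<Sum>i\<le>n. S (Suc i) (Suc (n - i)) a b c x y z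
        / (of_int a ^ i * of_int b ^ (n - i) * fact i * fact (n - i)) * l ^ i)
    = (\<Sum>i\<le>n. S (Suc i) (Suc (n - i)) c (-a) b z x y
        / (of_int c ^ i * of_int a ^ (n - i) * fact i * fact (n - i)) * (l ^ (n - i) * (l + 1) ^ i))
    + (\<Sum>i\<le>n. - (S (Suc i) (Suc (n - i)) c b a z (-y) x * (-1) ^ (n - i))
        / (of_int c ^ i * of_int b ^ (n - i) * fact i * fact (n - i)) * (l + 1) ^ i)"
    by (simp add: sum_negf)
qed

lemma sum_reindex_binomial_alternating:
  fixes B C :: real and F :: "nat \<Rightarrow> nat \<Rightarrow> real" and r m :: nat
  assumes "B \<noteq> 0" "C \<noteq> 0"
  shows "(\<Sum>h=1..Suc m. real (m choose (h - 1)) * (-1) ^ h * B powi (1 - int h)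
      * C powi (1 + int h - int (Suc r) - int (Suc m)) * F (Suc r + Suc m - h) h)
    = fact r * fact m * (\<Sum>i\<le>r + m. - (F (Suc i) (Suc (r + m - i)) * (-1) ^ (r + m - i))
      / (C ^ i * B ^ (r + m - i) * fact i * fact (r + m - i)) * of_nat (i choose r))"
proof -
  have binom: "(if m < r + m - i then 0 else real (i choose (m - (r + m - i)))) = real (i choose r)"
    if "i \<le> r + m" for i
    using that binomial_symmetric[of r i] by (auto simp: binomial_eq_0)
  have "(\<Sum>h=1..Suc m. real (m choose (h - 1)) * (-1) ^ h * B powi (1 - int h)
      * C powi (1 + int h - int (Suc r) - int (Suc m)) * F (Suc r + Suc m - h) h)
    = (\<Sum>h=1..Suc m. real (m choose (h - 1)) * B powi (1 - int h)
      * C powi (1 + int h - int (Suc m) - int (Suc r)) * ((-1) ^ h * F (Suc m + Suc r - h) h))"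
    by (intro sum.cong refl) (simp add: algebra_simps)
  also have "\<dots> = fact m * fact r * (\<Sum>i\<le>m + r. (-1) ^ Suc (m + r - i) * F (Suc i) (Suc (m + r - i))
      / (C ^ i * B ^ (m + r - i) * fact i * fact (m + r - i))
      * (if m < m + r - i then 0 else of_nat (i choose (m - (m + r - i)))))"
    by (rule sum_reindex_binomial[OF assms])
  also have "\<dots> = fact r * fact m * (\<Sum>i\<le>r + m. - (F (Suc i) (Suc (r + m - i)) * (-1) ^ (r + m - i))
      / (C ^ i * B ^ (r + m - i) * fact i * fact (r + m - i)) * of_nat (i choose r))"
    unfolding add.commute[of m r] mult.commute[of "fact m :: real" "fact r"]
    by (intro arg_cong[where f = "(*) (fact r * fact m)"] sum.cong refl) (simp add: binom)
  finally show ?thesis .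
qed

definition S_reciprocity_lhs :: "int \<Rightarrow> int \<Rightarrow> int \<Rightarrow> nat \<Rightarrow> nat \<Rightarrow> real \<Rightarrow> real \<Rightarrow> real \<Rightarrow> real" where
  "S_reciprocity_lhs a b c p q x y z
    = real_of_int a powi (1 - int p) * real_of_int b powi (1 - int q) * S p q a b c x y z"

definition S_reciprocity_rhs :: "int \<Rightarrow> int \<Rightarrow> int \<Rightarrow> nat \<Rightarrow> nat \<Rightarrow> real \<Rightarrow> real \<Rightarrow> real \<Rightarrow> real" where
  "S_reciprocity_rhs a b c p q x y z
    = (\<Sum>j=1..p. real (p - 1 choose (j - 1)) * real_of_int a powi (1 - int j)
          * real_of_int c powi (1 + int j - int p - int q) * S (p + q - j) j c (-a) b z x y)
    + (\<Sum>h=1..q. real (q - 1 choose (h - 1)) * (-1) ^ h * real_of_int b powi (1 - int h)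
          * real_of_int c powi (1 + int h - int p - int q) * S (p + q - h) h c b a z (-y) x)"

lemma S_reciprocity_generic:
  fixes a b c :: int and p q :: nat and x y z :: real
  assumes pos: "a > 0" "b > 0" "c > 0" and even: "even (a + b + c)" and "p \<ge> 1" "q \<ge> 1"
    and generic: "of_int c * x + of_int a * z \<notin> \<int>" "of_int b * x - of_int a * y \<notin> \<int>"
      "of_int c * y + of_int b * z \<notin> \<int>"
  shows "S_reciprocity_lhs a b c p q x y z = S_reciprocity_rhs a b c p q x y z"
proof -
  obtain r m where p_Suc: "p = Suc r" and q_Suc: "q = Suc m"
    using \<open>p \<ge> 1\<close> \<open>q \<ge> 1\<close> by (metis Suc_le_D One_nat_def)
  have nonzero: "real_of_int a \<noteq> 0" "real_of_int b \<noteq> 0" "real_of_int c \<noteq> 0"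
    using pos by simp_all
  have "S_reciprocity_lhs a b c p q x y z
      = fact r * fact m
        * (S (Suc r) (Suc m) a b c x y z / (of_int a ^ r * of_int b ^ m * fact r * fact m))"
    using nonzero by (simp add: S_reciprocity_lhs_def p_Suc q_Suc power_int_minus field_simps)
  also have "\<dots> = fact r * fact m *
      ((\<Sum>i\<le>r + m. S (Suc i) (Suc (r + m - i)) c (-a) b z x y
          / (of_int c ^ i * of_int a ^ (r + m - i) * fact i * fact (r + m - i))
          * (if r < r + m - i then 0 else of_nat (i choose (r - (r + m - i)))))
      + (\<Sum>i\<le>r + m. - (S (Suc i) (Suc (r + m - i)) c b a z (-y) x * (-1) ^ (r + m - i))
          / (of_int c ^ i * of_int b ^ (r + m - i) * fact i * fact (r + m - i))
          * of_nat (i choose r)))"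
    using S_coeff_reciprocity[OF pos even _ generic, of r "r + m"] by simp
  also have "\<dots> = S_reciprocity_rhs a b c p q x y z"
    unfolding S_reciprocity_rhs_def p_Suc q_Suc diff_Suc_1 distrib_left
      sum_reindex_binomial[OF nonzero(1,3), of r m "\<lambda>p q. S p q c (-a) b z x y"]
      sum_reindex_binomial_alternating[OF nonzero(2,3), of m r "\<lambda>p q. S p q c b a z (-y) x"] ..
  finally show ?thesis .
qed

section \<open>Removing the genericity assumption\<close>

lemma isCont_euler_poly: "isCont (euler_poly n) v"
proof -
  let ?G = "2 * inverse (fps_exp 1 + 1 :: real fps)"
  have "euler_poly n = (\<lambda>v. fact n * (\<Sum>i=0..n. v ^ i / fact i * fps_nth ?G (n - i)))"
  proof
    fix v
    have "euler_poly n v = fact n * fps_nth (fps_exp v * ?G) n"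
      by (simp add: euler_poly_def mult_ac)
    then show "euler_poly n v = fact n * (\<Sum>i=0..n. v ^ i / fact i * fps_nth ?G (n - i))"
      unfolding fps_mult_nth fps_exp_nth by simp
  qed
  then show ?thesis
    by (simp add: continuous_intros)
qed

lemma tendsto_euler_fun_line_at_right:
  assumes "k > 0"
  shows "((\<lambda>t. euler_fun n (w + k * t)) \<longlongrightarrow> euler_fun n w) (at_right 0)"
proof -
  define g where "g t = (-1) powi \<lfloor>w\<rfloor> * euler_poly n (w + k * t - of_int \<lfloor>w\<rfloor>)" for t
  have "(g \<longlongrightarrow> g 0) (at_right 0)"
    unfolding g_def by (intro tendsto_intros isCont_tendsto_compose[OF isCont_euler_poly])
  moreover have "eventually (\<lambda>t. g t = euler_fun n (w + k * t)) (at_right 0)"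
    using eventually_floor_line_at_right[OF assms, of w]
    by eventually_elim (simp add: g_def euler_fun_def)
  ultimately show ?thesis
    by (simp add: g_def euler_fun_def tendsto_cong)
qed

lemma tendsto_S_at_right:
  fixes a b c :: int
  assumes "c > 0" "of_int a * sz / of_int c + sx > 0" "of_int b * sz / of_int c + sy > 0"
  shows "((\<lambda>t. S p q a b c (x + sx * t) (y + sy * t) (z + sz * t)) \<longlongrightarrow> S p q a b c x y z)
    (at_right 0)"
proof -
  have line: "of_int e * (of_int \<mu> + (z + sz * t)) / of_int c + (v + \<kappa> * t)
      = (of_int e * (of_int \<mu> + z) / of_int c + v) + (of_int e * sz / of_int c + \<kappa>) * t"
    for e \<mu> v \<kappa> t
    using assms(1) by (simp add: field_simps)
  show ?thesis
    unfolding S_def line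
    by (intro tendsto_intros tendsto_euler_fun_line_at_right assms)
qed

lemma tendsto_S_reciprocity_lhs:
  assumes "a > 0" "b > 0" "c > 0"
  shows "((\<lambda>t. S_reciprocity_lhs a b c p q (x + t) y (z + t)) \<longlongrightarrow> S_reciprocity_lhs a b c p q x y z)
    (at_right 0)"
proof -
  have "0 < real_of_int a / real_of_int c + 1"
    using assms by (simp add: add_pos_pos)
  then show ?thesis
    using tendsto_S_at_right[of c a 1 1 b 0 p q x y z] assms
    unfolding S_reciprocity_lhs_def by (intro tendsto_intros) simp_all
qed

lemma tendsto_S_reciprocity_rhs:
  assumes "a > 0" "b > 0" "c > 0"
  shows "((\<lambda>t. S_reciprocity_rhs a b c p q (x + t) y (z + t)) \<longlongrightarrow> S_reciprocity_rhs a b c p q x y z)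
    (at_right 0)"
proof -
  have "0 < real_of_int c / real_of_int a + 1"
    using assms by (simp add: add_pos_pos)
  then show ?thesis
    using tendsto_S_at_right[of b c 0 1 "- a" 1 _ _ z x y]
      tendsto_S_at_right[of a c 1 1 b 0 _ _ z "- y" x] assms
    unfolding S_reciprocity_rhs_def by (intro tendsto_intros) simp_all
qed

lemma eventually_S_reciprocity_at_right:
  fixes a b c :: int and p q :: nat and x y z :: real
  assumes pos: "a > 0" "b > 0" "c > 0" and even: "even (a + b + c)" and pq: "p \<ge> 1" "q \<ge> 1"
  shows "eventually (\<lambda>t. S_reciprocity_lhs a b c p q (x + t) y (z + t)
    = S_reciprocity_rhs a b c p q (x + t) y (z + t)) (at_right 0)"
proof -
  have slopes: "(0::real) < of_int a + of_int c" "(0::real) < of_int b"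
    using pos by simp_all
  show ?thesis
    using eventually_floor_line_at_right[OF slopes(1), of "of_int c * x + of_int a * z"]
      eventually_floor_line_at_right[OF slopes(2), of "of_int b * x - of_int a * y"]
      eventually_floor_line_at_right[OF slopes(2), of "of_int c * y + of_int b * z"]
  proof eventually_elim
    case (elim t)
    then show ?case
      by (intro S_reciprocity_generic pos even pq) (simp_all add: algebra_simps)
  qed
qed

theorem theorem2:
  fixes a b c :: int and p q :: nat and x y z :: real
  assumes "a > 0" and "b > 0" and "c > 0"
    and "coprime a b" and "coprime b c" and "coprime a c"
    and "even (a + b + c)"
    and "p \<ge> 1" and "q \<ge> 1"
  shows "real_of_int a powi (1 - int p) * real_of_int b powi (1 - int q) * S p q a b c x y z
    = (\<Sum>j=1..p. real (p - 1 choose (j - 1)) * real_of_int a powi (1 - int j)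
          * real_of_int c powi (1 + int j - int p - int q) * S (p + q - j) j c (-a) b z x y)
    + (\<Sum>h=1..q. real (q - 1 choose (h - 1)) * (-1) ^ h * real_of_int b powi (1 - int h)
          * real_of_int c powi (1 + int h - int p - int q) * S (p + q - h) h c b a z (-y) x)"
proof -
  have "S_reciprocity_lhs a b c p q x y z = S_reciprocity_rhs a b c p q x y z"
    using tendsto_unique[OF trivial_limit_at_right_real tendsto_S_reciprocity_lhs[OF assms(1-3)]
        tendsto_cong[OF eventually_S_reciprocity_at_right[OF assms(1-3,7-9)], THEN iffD2,
          OF tendsto_S_reciprocity_rhs[OF assms(1-3)]]] .
  then show ?thesis
    unfolding S_reciprocity_lhs_def S_reciprocity_rhs_def .
qed

end
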